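(* A function $f:X\to Y$ between topological spaces is strongly-$SC^*$-closed if and only if for every subset $J\subseteq Y$ and every $SC^*$-open set $M$ in $X$ with $f^{-1}(J)\subseteq M$, there exists an $SC^*$-open set $N$ in $Y$ with $J\subseteq N$ and $f^{-1}(N)\subseteq M$.
   Context: For $A\subseteq Z$ in a topological space $Z$: $A$ is semi-open if $A\subseteq cl(int(A))$, semi-closed if its complement is semi-open; $scl(A)$ is the smallest semi-closed set containing $A$. $A$ is $c^*$-open if $int(cl(A))\subseteq A\subseteq cl(int(A))$. $A$ is $SC^*$-closed if $scl(A)\subseteq U$ whenever $A\subseteq U$ and $U$ is $c^*$-open; $A$ is $SC^*$-open if $Z\setminus A$ is $SC^*$-closed. A function $f:X\to Y$ is strongly-$SC^*$-closed if $f(M)$ is $SC^*$-closed in $Y$ for every $SC^*$-closed set $M$ in $X$. *)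

theory Defs
  imports "HOL-Analysis.Analysis"
begin

definition semi_open_in :: "'a topology \<Rightarrow> 'a set \<Rightarrow> bool" where
  "semi_open_in Z A \<longleftrightarrow> A \<subseteq> topspace Z \<and> A \<subseteq> Z closure_of (Z interior_of A)"

definition semi_closed_in :: "'a topology \<Rightarrow> 'a set \<Rightarrow> bool" where
  "semi_closed_in Z A \<longleftrightarrow> A \<subseteq> topspace Z \<and> semi_open_in Z (topspace Z - A)"

definition scl_of :: "'a topology \<Rightarrow> 'a set \<Rightarrow> 'a set" where
  "scl_of Z A = \<Inter>{B. semi_closed_in Z B \<and> A \<subseteq> B}"

definition cstar_open_in :: "'a topology \<Rightarrow> 'a set \<Rightarrow> bool" where
  "cstar_open_in Z A \<longleftrightarrow> A \<subseteq> topspace Z \<and>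
     Z interior_of (Z closure_of A) \<subseteq> A \<and> A \<subseteq> Z closure_of (Z interior_of A)"

definition SCstar_closed_in :: "'a topology \<Rightarrow> 'a set \<Rightarrow> bool" where
  "SCstar_closed_in Z A \<longleftrightarrow> A \<subseteq> topspace Z \<and>
     (\<forall>U. cstar_open_in Z U \<and> A \<subseteq> U \<longrightarrow> scl_of Z A \<subseteq> U)"

definition SCstar_open_in :: "'a topology \<Rightarrow> 'a set \<Rightarrow> bool" where
  "SCstar_open_in Z A \<longleftrightarrow> A \<subseteq> topspace Z \<and> SCstar_closed_in Z (topspace Z - A)"

definition strongly_SCstar_closed_map :: "'a topology \<Rightarrow> 'b topology \<Rightarrow> ('a \<Rightarrow> 'b) \<Rightarrow> bool" where
  "strongly_SCstar_closed_map X Y f \<longleftrightarrow>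
     (\<forall>M. SCstar_closed_in X M \<longrightarrow> SCstar_closed_in Y (f ` M))"

end

theory Submission
  imports Defs
begin

text \<open>Both directions are complementation. Given \<open>J\<close> and an \<open>SC\<^sup>*\<close>-open \<open>M\<close> with
  \<open>f\<^sup>-\<^sup>1(J) \<subseteq> M\<close>, take \<open>N = Y - f(X - M)\<close>, which is \<open>SC\<^sup>*\<close>-open because \<open>f\<close> maps the
  \<open>SC\<^sup>*\<close>-closed set \<open>X - M\<close> to an \<open>SC\<^sup>*\<close>-closed set. Conversely, for an \<open>SC\<^sup>*\<close>-closed \<open>M\<close>
  apply the condition to \<open>J = Y - f(M)\<close> and \<open>X - M\<close>: the resulting \<open>N\<close> contains \<open>J\<close>
  and misses \<open>f(M)\<close>, so \<open>f(M) = Y - N\<close> is \<open>SC\<^sup>*\<close>-closed.\<close>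

lemma SCstar_closed_in_subset: "SCstar_closed_in Z A \<Longrightarrow> A \<subseteq> topspace Z"
  by (simp add: SCstar_closed_in_def)

lemma SCstar_closed_in_complement:
  "SCstar_open_in Z A \<Longrightarrow> SCstar_closed_in Z (topspace Z - A)"
  by (simp add: SCstar_open_in_def)

lemma SCstar_open_in_complement:
  assumes "SCstar_closed_in Z A"
  shows "SCstar_open_in Z (topspace Z - A)"
proof -
  have "topspace Z - (topspace Z - A) = A"
    using SCstar_closed_in_subset [OF assms] by blast
  with assms show ?thesis
    by (simp add: SCstar_open_in_def)
qed

lemma strongly_SCstar_closed_map_preimage_nbhd:
  assumes closed_map: "strongly_SCstar_closed_map X Y f"
    and J: "J \<subseteq> topspace Y" and M: "SCstar_open_in X M"
    and preimage: "{x \<in> topspace X. f x \<in> J} \<subseteq> M"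
  obtains N where "SCstar_open_in Y N" "J \<subseteq> N" "{x \<in> topspace X. f x \<in> N} \<subseteq> M"
proof
  show "SCstar_open_in Y (topspace Y - f ` (topspace X - M))"
    using closed_map SCstar_closed_in_complement [OF M]
    unfolding strongly_SCstar_closed_map_def by (blast intro: SCstar_open_in_complement)
  show "J \<subseteq> topspace Y - f ` (topspace X - M)"
    using J preimage by blast
qed blast

lemma strongly_SCstar_closed_map_if_preimage_nbhd:
  assumes f: "f \<in> topspace X \<rightarrow> topspace Y"
    and nbhd: "\<And>J M. \<lbrakk>J \<subseteq> topspace Y; SCstar_open_in X M; {x \<in> topspace X. f x \<in> J} \<subseteq> M\<rbrakk>
        \<Longrightarrow> \<exists>N. SCstar_open_in Y N \<and> J \<subseteq> N \<and> {x \<in> topspace X. f x \<in> N} \<subseteq> M"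
  shows "strongly_SCstar_closed_map X Y f"
  unfolding strongly_SCstar_closed_map_def
proof (intro allI impI)
  fix M
  assume M: "SCstar_closed_in X M"
  then have MX: "M \<subseteq> topspace X"
    by (rule SCstar_closed_in_subset)
  obtain N where N: "SCstar_open_in Y N" "topspace Y - f ` M \<subseteq> N"
      "{x \<in> topspace X. f x \<in> N} \<subseteq> topspace X - M"
  proof -
    have "{x \<in> topspace X. f x \<in> topspace Y - f ` M} \<subseteq> topspace X - M"
      by blast
    with that show ?thesis
      using nbhd [OF Diff_subset SCstar_open_in_complement [OF M]] by blast
  qed
  have "f ` M \<subseteq> topspace Y"
    using f MX by blast
  with N(2,3) MX have "f ` M = topspace Y - N"
    by blast
  then show "SCstar_closed_in Y (f ` M)"
    using SCstar_closed_in_complement [OF N(1)] by simp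
qed

theorem theorem3p3:
  fixes X :: "'a topology" and Y :: "'b topology" and f :: "'a \<Rightarrow> 'b"
  assumes "f \<in> topspace X \<rightarrow> topspace Y"
  shows "strongly_SCstar_closed_map X Y f \<longleftrightarrow>
    (\<forall>J M. J \<subseteq> topspace Y \<and> SCstar_open_in X M \<and> {x \<in> topspace X. f x \<in> J} \<subseteq> M \<longrightarrow>
       (\<exists>N. SCstar_open_in Y N \<and> J \<subseteq> N \<and> {x \<in> topspace X. f x \<in> N} \<subseteq> M))"
proof (intro iffI allI impI; (elim conjE)?)
  fix J M
  assume "strongly_SCstar_closed_map X Y f" "J \<subseteq> topspace Y" "SCstar_open_in X M"
    "{x \<in> topspace X. f x \<in> J} \<subseteq> M"
  then obtain N where "SCstar_open_in Y N" "J \<subseteq> N" "{x \<in> topspace X. f x \<in> N} \<subseteq> M"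
    by (rule strongly_SCstar_closed_map_preimage_nbhd)
  then show "\<exists>N. SCstar_open_in Y N \<and> J \<subseteq> N \<and> {x \<in> topspace X. f x \<in> N} \<subseteq> M"
    by (intro exI conjI)
next
  assume "\<forall>J M. J \<subseteq> topspace Y \<and> SCstar_open_in X M \<and> {x \<in> topspace X. f x \<in> J} \<subseteq> M \<longrightarrow>
      (\<exists>N. SCstar_open_in Y N \<and> J \<subseteq> N \<and> {x \<in> topspace X. f x \<in> N} \<subseteq> M)"
  then show "strongly_SCstar_closed_map X Y f"
    by (intro strongly_SCstar_closed_map_if_preimage_nbhd [OF assms]) simp
qed

end
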